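(* Let $X$ be a finite set with $N=|X|\ge 2$, $n=\binom N2$, and let $\mathcal{X}$ be a partition of $X$. Let $\Gamma$ be the set of all $t\in\mathcal{B}(K_N)$ whose coarse type is $\mathcal{X}$. Then $\Gamma$ is tropically convex: for all $s,t\in\Gamma$ and all $\lambda,\mu\in\mathbb{R}$, the coordinatewise maximum $\max\{s+\lambda\mathbb{1},\,t+\mu\mathbb{1}\}$ lies in $\Gamma$.
   Context: Coordinates of $\mathbb{R}^n$ are indexed by unordered pairs $\{a,b\}$ of distinct elements of $X$, written $t_{ab}$; $\mathbb{1}$ is the all-ones vector. The Bergman fan of the complete graphical matroid is $\mathcal{B}(K_N)=\{t\in\mathbb{R}^n : \text{for all pairwise distinct } a,b,c\in X, \text{ the maximum of } t_{ab},t_{ac},t_{bc} \text{ is attained at least twice}\}$; its elements correspond to equidistant phylogenetic trees with leaf set $X$ via $t_{ab}=$ path length between leaves $a,b$. The coarse type of $t\in\mathcal{B}(K_N)$ is the partition $\{X_i\}_{i\in I}$ of $X$ such that, with $M=\max_{a\neq b}t_{ab}$, two distinct elements $a,b$ lie in the same block iff $t_{ab}<M$; equivalently, $\max\{t_{ab}: a\ne b \text{ in a common block}\}<\min\{t_{ab}: a\in X_i,b\in X_j,i\neq j\}=\max\{t_{ab}: a\in X_i,b\in X_j,i\ne j\}$ (these are the leaf sets of the subtrees hanging at the children of the root). *)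

theory Defs
  imports Complex_Main
begin

text \<open>Points of R^n, n = N choose 2, are functions t on the unordered pairs {a,b}
  (a \<noteq> b in X); the coordinate t_ab is t {a,b}. Values of t on other sets are irrelevant.\<close>

definition in_bergman :: "'a set \<Rightarrow> ('a set \<Rightarrow> real) \<Rightarrow> bool" where
  "in_bergman X t \<longleftrightarrow>
    (\<forall>a\<in>X. \<forall>b\<in>X. \<forall>c\<in>X. a \<noteq> b \<and> a \<noteq> c \<and> b \<noteq> c \<longrightarrow>
      (let m = max (max (t {a,b}) (t {a,c})) (t {b,c}) in
        (t {a,b} = m \<and> t {a,c} = m) \<or> (t {a,b} = m \<and> t {b,c} = m) \<or>
        (t {a,c} = m \<and> t {b,c} = m)))"

definition is_partition :: "'a set set \<Rightarrow> 'a set \<Rightarrow> bool" where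
  "is_partition P X \<longleftrightarrow> \<Union>P = X \<and> (\<forall>B\<in>P. B \<noteq> {}) \<and>
     (\<forall>B\<in>P. \<forall>C\<in>P. B \<noteq> C \<longrightarrow> B \<inter> C = {})"

definition max_coord :: "'a set \<Rightarrow> ('a set \<Rightarrow> real) \<Rightarrow> real" where
  "max_coord X t = Max {t {a,b} | a b. a \<in> X \<and> b \<in> X \<and> a \<noteq> b}"

definition has_coarse_type :: "'a set \<Rightarrow> ('a set \<Rightarrow> real) \<Rightarrow> 'a set set \<Rightarrow> bool" where
  "has_coarse_type X t P \<longleftrightarrow> is_partition P X \<and>
     (\<forall>a\<in>X. \<forall>b\<in>X. a \<noteq> b \<longrightarrow>
        ((\<exists>B\<in>P. a \<in> B \<and> b \<in> B) \<longleftrightarrow> t {a,b} < max_coord X t))"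

definition Gamma :: "'a set \<Rightarrow> 'a set set \<Rightarrow> ('a set \<Rightarrow> real) set" where
  "Gamma X P = {t. in_bergman X t \<and> has_coarse_type X t P}"

end

theory Submission
  imports Defs
begin

text \<open>The max-attained-twice condition is the ultrametric three-point inequality, which is
  preserved by adding a constant and by coordinatewise maxima. For the coarse type, the maximal
  coordinate of a coordinatewise maximum is the maximum of the maximal coordinates; since s and t
  have the same coarse type, a pair attains the maximum in s exactly when it does in t, and then
  also in the coordinatewise maximum.\<close>

definition complete_edges :: "'a set \<Rightarrow> 'a set set" where
  "complete_edges X = {{a,b} | a b. a \<in> X \<and> b \<in> X \<and> a \<noteq> b}"

lemma finite_complete_edges: "finite X \<Longrightarrow> finite (complete_edges X)"
  unfolding complete_edges_def by (rule finite_subset[of _ "Pow X"]) auto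

lemma complete_edges_nonempty:
  assumes "card X \<ge> 2"
  shows "complete_edges X \<noteq> {}"
proof -
  have "finite X" using assms by (auto intro: card_ge_0_finite)
  then obtain a b where "a \<in> X" "b \<in> X" "a \<noteq> b"
    using assms card_le_Suc0_iff_eq[of X] by fastforce
  then show ?thesis unfolding complete_edges_def by blast
qed

lemma max_coord_eq_Max: "max_coord X t = Max (t ` complete_edges X)"
  unfolding max_coord_def complete_edges_def by (rule arg_cong[where f = Max]) blast

lemma max_coord_ge:
  assumes "finite X" "a \<in> X" "b \<in> X" "a \<noteq> b"
  shows "t {a,b} \<le> max_coord X t"
proof -
  have "{a,b} \<in> complete_edges X" using assms unfolding complete_edges_def by blast
  then show ?thesis unfolding max_coord_eq_Max using assms(1) by (simp add: finite_complete_edges)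
qed

lemma max_coord_add_const:
  assumes "card X \<ge> 2"
  shows "max_coord X (\<lambda>e. t e + c) = max_coord X t + c"
  unfolding max_coord_eq_Max using assms
  by (intro Max_add_commute finite_complete_edges complete_edges_nonempty)
    (auto intro: card_ge_0_finite)

lemma Max_pointwise_max:
  fixes f g :: "'b \<Rightarrow> 'c::linorder"
  assumes "finite E" "E \<noteq> {}"
  shows "Max ((\<lambda>e. max (f e) (g e)) ` E) = max (Max (f ` E)) (Max (g ` E))"
  using assms by (induction E rule: finite_ne_induct) (auto simp: max.assoc max.left_commute)

lemma max_coord_max:
  assumes "card X \<ge> 2"
  shows "max_coord X (\<lambda>e. max (s e) (t e)) = max (max_coord X s) (max_coord X t)"
  unfolding max_coord_eq_Max using assms
  by (intro Max_pointwise_max finite_complete_edges complete_edges_nonempty)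
    (auto intro: card_ge_0_finite)

lemma in_bergman_iff_ultrametric:
  "in_bergman X t \<longleftrightarrow>
    (\<forall>a\<in>X. \<forall>b\<in>X. \<forall>c\<in>X. a \<noteq> b \<and> a \<noteq> c \<and> b \<noteq> c \<longrightarrow>
      t {a,b} \<le> max (t {a,c}) (t {b,c}))"
  (is "_ \<longleftrightarrow> (\<forall>a\<in>X. \<forall>b\<in>X. \<forall>c\<in>X. ?distinct a b c \<longrightarrow> ?ultra a b c)")
proof
  assume "in_bergman X t"
  then show "\<forall>a\<in>X. \<forall>b\<in>X. \<forall>c\<in>X. ?distinct a b c \<longrightarrow> ?ultra a b c"
    unfolding in_bergman_def Let_def by (smt (verit))
next
  assume ultra: "\<forall>a\<in>X. \<forall>b\<in>X. \<forall>c\<in>X. ?distinct a b c \<longrightarrow> ?ultra a b c"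
  show "in_bergman X t"
    unfolding in_bergman_def
  proof (intro ballI impI)
    fix a b c assume abc: "a \<in> X" "b \<in> X" "c \<in> X" "?distinct a b c"
    have "?ultra a b c" "?ultra a c b" "?ultra b c a"
      using ultra abc by auto
    then show "let m = max (max (t {a,b}) (t {a,c})) (t {b,c}) in
        (t {a,b} = m \<and> t {a,c} = m) \<or> (t {a,b} = m \<and> t {b,c} = m) \<or>
        (t {a,c} = m \<and> t {b,c} = m)"
      by (auto simp: insert_commute Let_def max_def split: if_splits)
  qed
qed

lemma in_bergman_add_const: "in_bergman X t \<Longrightarrow> in_bergman X (\<lambda>e. t e + c)"
  unfolding in_bergman_iff_ultrametric by (simp add: max_add_distrib_left[symmetric])

lemma in_bergman_max:
  "in_bergman X s \<Longrightarrow> in_bergman X t \<Longrightarrow> in_bergman X (\<lambda>e. max (s e) (t e))"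
  unfolding in_bergman_iff_ultrametric by (smt (verit))

lemma has_coarse_type_add_const:
  assumes "card X \<ge> 2" "has_coarse_type X t P"
  shows "has_coarse_type X (\<lambda>e. t e + c) P"
  using assms unfolding has_coarse_type_def max_coord_add_const[OF assms(1)] by simp

lemma has_coarse_type_max:
  assumes X: "card X \<ge> 2" and s: "has_coarse_type X s P" and t: "has_coarse_type X t P"
  shows "has_coarse_type X (\<lambda>e. max (s e) (t e)) P"
  unfolding has_coarse_type_def max_coord_max[OF X]
proof (intro conjI ballI impI)
  show "is_partition P X" using s unfolding has_coarse_type_def by blast
  fix a b assume ab: "a \<in> X" "b \<in> X" "a \<noteq> b"
  have "finite X" using X by (auto intro: card_ge_0_finite)
  then have "s {a,b} \<le> max_coord X s" "t {a,b} \<le> max_coord X t"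
    using ab by (auto intro: max_coord_ge)
  moreover have "(\<exists>B\<in>P. a \<in> B \<and> b \<in> B) \<longleftrightarrow> s {a,b} < max_coord X s"
    and "(\<exists>B\<in>P. a \<in> B \<and> b \<in> B) \<longleftrightarrow> t {a,b} < max_coord X t"
    using s t ab unfolding has_coarse_type_def by blast+
  ultimately show "(\<exists>B\<in>P. a \<in> B \<and> b \<in> B) \<longleftrightarrow>
      max (s {a,b}) (t {a,b}) < max (max_coord X s) (max_coord X t)"
    by linarith
qed

lemma Gamma_add_const: "card X \<ge> 2 \<Longrightarrow> t \<in> Gamma X P \<Longrightarrow> (\<lambda>e. t e + c) \<in> Gamma X P"
  unfolding Gamma_def by (simp add: in_bergman_add_const has_coarse_type_add_const)

lemma Gamma_max:
  "card X \<ge> 2 \<Longrightarrow> s \<in> Gamma X P \<Longrightarrow> t \<in> Gamma X P \<Longrightarrow> (\<lambda>e. max (s e) (t e)) \<in> Gamma X P"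
  unfolding Gamma_def by (simp add: in_bergman_max has_coarse_type_max)

theorem mainTheorem4:
  fixes X :: "'a set" and P :: "'a set set" and s t :: "'a set \<Rightarrow> real"
    and lam mu :: real
  assumes "finite X" and "card X \<ge> 2" and "is_partition P X"
    and "s \<in> Gamma X P" and "t \<in> Gamma X P"
  shows "(\<lambda>e. max (s e + lam) (t e + mu)) \<in> Gamma X P"
  using assms(2,4,5) by (intro Gamma_max Gamma_add_const[where t = s] Gamma_add_const[where t = t])

end
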